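(* Let $\mathbf A$ be a finite subdirectly irreducible cBCK-algebra and let $a$ be an atom of $\mathbf A$. Then $\mathbf A$ is generated (as a cBCK-algebra) by the set $\mathrm{m}(\mathbf A) \cup \{a\}$.
   Context: A BCK-algebra is an algebra $(A,\ominus,0)$ of type $(2,0)$ satisfying $((x\ominus y)\ominus(x\ominus z))\ominus(z\ominus y)=0$, $x\ominus 0=x$, $0\ominus x=0$, and the quasi-identity ($x\ominus y=0$ and $y\ominus x=0$ imply $x=y$). It is partially ordered by $x\le y$ iff $x\ominus y=0$; $0$ is the least element. A cBCK-algebra (commutative BCK-algebra) is a BCK-algebra additionally satisfying $x\ominus(x\ominus y)=y\ominus(y\ominus x)$; cBCK-algebras form a variety, and the order is a meet-semilattice with $x\wedge y=x\ominus(x\ominus y)$. It is known that a finite nontrivial subdirectly irreducible cBCK-algebra has a unique atom and, as a poset, is a rooted tree with root $0$. $\mathrm{m}(\mathbf A)$ denotes the set of maximal elements of $\mathbf A$. *)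

theory Defs
  imports Main
begin

text \<open>An algebra of type (2,0) is given by a carrier set A, a binary operation
  m (the operation \<ominus>) and a constant z (the element 0).\<close>

definition bck_algebra :: "'a set \<Rightarrow> ('a \<Rightarrow> 'a \<Rightarrow> 'a) \<Rightarrow> 'a \<Rightarrow> bool" where
  "bck_algebra A m z \<longleftrightarrow>
     z \<in> A \<and> (\<forall>x\<in>A. \<forall>y\<in>A. m x y \<in> A) \<and>
     (\<forall>x\<in>A. \<forall>y\<in>A. \<forall>w\<in>A. m (m (m x y) (m x w)) (m w y) = z) \<and>
     (\<forall>x\<in>A. m x z = x) \<and>
     (\<forall>x\<in>A. m z x = z) \<and>
     (\<forall>x\<in>A. \<forall>y\<in>A. m x y = z \<and> m y x = z \<longrightarrow> x = y)"

definition cbck_algebra :: "'a set \<Rightarrow> ('a \<Rightarrow> 'a \<Rightarrow> 'a) \<Rightarrow> 'a \<Rightarrow> bool" where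
  "cbck_algebra A m z \<longleftrightarrow> bck_algebra A m z \<and>
     (\<forall>x\<in>A. \<forall>y\<in>A. m x (m x y) = m y (m y x))"

definition bck_le :: "('a \<Rightarrow> 'a \<Rightarrow> 'a) \<Rightarrow> 'a \<Rightarrow> 'a \<Rightarrow> 'a \<Rightarrow> bool" where
  "bck_le m z x y \<longleftrightarrow> m x y = z"

definition bck_atom :: "'a set \<Rightarrow> ('a \<Rightarrow> 'a \<Rightarrow> 'a) \<Rightarrow> 'a \<Rightarrow> 'a \<Rightarrow> bool" where
  "bck_atom A m z a \<longleftrightarrow> a \<in> A \<and> a \<noteq> z \<and>
     (\<forall>x\<in>A. bck_le m z x a \<longrightarrow> x = z \<or> x = a)"

definition bck_maximal :: "'a set \<Rightarrow> ('a \<Rightarrow> 'a \<Rightarrow> 'a) \<Rightarrow> 'a \<Rightarrow> 'a set" where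
  "bck_maximal A m z = {x \<in> A. \<forall>y\<in>A. bck_le m z x y \<longrightarrow> y = x}"

text \<open>Congruences of the algebra (A, m, z): equivalence relations on A
  compatible with the binary operation (the constant is trivially respected).\<close>
definition alg_congruence :: "'a set \<Rightarrow> ('a \<Rightarrow> 'a \<Rightarrow> 'a) \<Rightarrow> ('a \<times> 'a) set \<Rightarrow> bool" where
  "alg_congruence A m \<theta> \<longleftrightarrow> equiv A \<theta> \<and>
     (\<forall>x1 y1 x2 y2. (x1, y1) \<in> \<theta> \<and> (x2, y2) \<in> \<theta> \<longrightarrow> (m x1 x2, m y1 y2) \<in> \<theta>)"

definition subdirectly_irreducible :: "'a set \<Rightarrow> ('a \<Rightarrow> 'a \<Rightarrow> 'a) \<Rightarrow> bool" where
  "subdirectly_irreducible A m \<longleftrightarrow>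
     (\<exists>x\<in>A. \<exists>y\<in>A. x \<noteq> y) \<and>
     \<Inter> {\<theta>. alg_congruence A m \<theta> \<and> \<theta> \<noteq> Id_on A} \<noteq> Id_on A"

inductive_set generated :: "('a \<Rightarrow> 'a \<Rightarrow> 'a) \<Rightarrow> 'a \<Rightarrow> 'a set \<Rightarrow> 'a set"
  for m :: "'a \<Rightarrow> 'a \<Rightarrow> 'a" and z :: 'a and X :: "'a set" where
  gen_base: "x \<in> X \<Longrightarrow> x \<in> generated m z X"
| gen_zero: "z \<in> generated m z X"
| gen_op: "x \<in> generated m z X \<Longrightarrow> y \<in> generated m z X \<Longrightarrow> m x y \<in> generated m z X"

end

theory Submission
  imports Defs
begin

text \<open>For an atom \<open>c\<close>, the elements not above \<open>c\<close> form an ideal \<open>I\<close>; its congruence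
  \<open>x \<equiv> y \<longleftrightarrow> x \<ominus> y, y \<ominus> x \<in> I\<close> identifies \<open>x\<close> with \<open>0\<close> exactly when \<open>c \<le> x\<close> fails.
  Taking \<open>c\<close> below \<open>p \<ominus> q\<close> or \<open>q \<ominus> p\<close> for a pair \<open>(p, q)\<close> in the monolith, this
  congruence does not contain the monolith and so is the identity: \<open>c\<close>, and hence the
  given atom \<open>a\<close>, lies below every nonzero element. In a commutative BCK-algebra, if \<open>y\<close>
  covers \<open>x\<close> then \<open>a \<le> y \<ominus> x\<close>, so \<open>x = y \<ominus> (y \<ominus> x) \<le> y \<ominus> a < y\<close> and thus
  \<open>y \<ominus> a = x\<close>. Descending from the maximal elements along covers generates everything.\<close>

lemma subdirectly_irreducible_obtain_monolith_pair:
  assumes closed: "\<And>x y. x \<in> A \<Longrightarrow> y \<in> A \<Longrightarrow> m x y \<in> A"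
    and si: "subdirectly_irreducible A m"
  obtains p q where "p \<in> A" "q \<in> A" "p \<noteq> q"
    and "\<And>\<theta>. alg_congruence A m \<theta> \<Longrightarrow> \<theta> \<noteq> Id_on A \<Longrightarrow> (p, q) \<in> \<theta>"
proof -
  let ?C = "{\<theta>. alg_congruence A m \<theta> \<and> \<theta> \<noteq> Id_on A}"
  obtain x y where "x \<in> A" "y \<in> A" "x \<noteq> y"
    using si unfolding subdirectly_irreducible_def by blast
  then have "A \<times> A \<in> ?C"
    using closed by (auto simp: alg_congruence_def equiv_def refl_on_def sym_def trans_def)
  then have "\<Inter> ?C \<subseteq> A \<times> A" by blast
  moreover have "Id_on A \<subseteq> \<Inter> ?C"
    by (auto simp: alg_congruence_def equiv_def refl_on_def)
  moreover have "\<Inter> ?C \<noteq> Id_on A"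
    using si unfolding subdirectly_irreducible_def by blast
  ultimately have "\<not> \<Inter> ?C \<subseteq> Id_on A" by blast
  then obtain p q where "(p, q) \<in> \<Inter> ?C" "(p, q) \<notin> Id_on A" by auto
  moreover from this have "p \<in> A" "q \<in> A" using \<open>\<Inter> ?C \<subseteq> A \<times> A\<close> by auto
  ultimately show thesis using that by auto
qed

locale bck =
  fixes A :: "'a set" and m :: "'a \<Rightarrow> 'a \<Rightarrow> 'a" (infixl "\<ominus>" 70) and z :: 'a
  assumes zero_mem: "z \<in> A"
    and diff_closed: "x \<in> A \<Longrightarrow> y \<in> A \<Longrightarrow> x \<ominus> y \<in> A"
    and bck_axiom: "x \<in> A \<Longrightarrow> y \<in> A \<Longrightarrow> w \<in> A \<Longrightarrow> ((x \<ominus> y) \<ominus> (x \<ominus> w)) \<ominus> (w \<ominus> y) = z"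
    and diff_zero: "x \<in> A \<Longrightarrow> x \<ominus> z = x"
    and zero_diff: "x \<in> A \<Longrightarrow> z \<ominus> x = z"
    and le_antisym: "x \<in> A \<Longrightarrow> y \<in> A \<Longrightarrow> x \<ominus> y = z \<Longrightarrow> y \<ominus> x = z \<Longrightarrow> x = y"
begin

abbreviation le :: "'a \<Rightarrow> 'a \<Rightarrow> bool" (infix "\<preceq>" 50) where
  "x \<preceq> y \<equiv> x \<ominus> y = z"

lemma diff_diff_le: "x \<in> A \<Longrightarrow> y \<in> A \<Longrightarrow> x \<ominus> (x \<ominus> y) \<preceq> y"
  using bck_axiom[of x z y] by (simp add: diff_zero zero_mem)

lemma le_refl: "x \<in> A \<Longrightarrow> x \<preceq> x"
  using diff_diff_le[of x z] by (simp add: diff_zero zero_mem diff_closed)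

lemma le_trans: "x \<in> A \<Longrightarrow> y \<in> A \<Longrightarrow> w \<in> A \<Longrightarrow> x \<preceq> y \<Longrightarrow> y \<preceq> w \<Longrightarrow> x \<preceq> w"
  using bck_axiom[of x w y] by (simp add: diff_zero diff_closed)

lemma diff_antimono: "x \<in> A \<Longrightarrow> y \<in> A \<Longrightarrow> w \<in> A \<Longrightarrow> x \<preceq> y \<Longrightarrow> w \<ominus> y \<preceq> w \<ominus> x"
  using bck_axiom[of w y x] by (simp add: diff_zero diff_closed)

lemma diff_mono: "x \<in> A \<Longrightarrow> y \<in> A \<Longrightarrow> w \<in> A \<Longrightarrow> x \<preceq> y \<Longrightarrow> x \<ominus> w \<preceq> y \<ominus> w"
  using bck_axiom[of x w y] by (simp add: diff_zero diff_closed)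

lemma diff_le: "x \<in> A \<Longrightarrow> y \<in> A \<Longrightarrow> x \<ominus> y \<preceq> x"
  using diff_antimono[of z y x] by (simp add: diff_zero zero_diff zero_mem)

lemma diff_cancel_right_le:
  assumes "x \<in> A" "y \<in> A" "w \<in> A"
  shows "(x \<ominus> w) \<ominus> (y \<ominus> w) \<preceq> x \<ominus> y"
proof -
  let ?u = "x \<ominus> w" and ?v = "x \<ominus> y"
  have "?u \<ominus> ?v \<preceq> y \<ominus> w" using bck_axiom[of x w y] assms by simp
  then have "?u \<ominus> (y \<ominus> w) \<preceq> ?u \<ominus> (?u \<ominus> ?v)"
    using assms by (simp add: diff_antimono diff_closed)
  moreover have "?u \<ominus> (?u \<ominus> ?v) \<preceq> ?v" using assms by (simp add: diff_diff_le diff_closed)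
  ultimately show ?thesis by (rule le_trans[rotated 3]) (simp_all add: assms diff_closed)
qed

lemma finite_ex_minimal:
  assumes "finite A" "S \<subseteq> A" "s \<in> S"
  shows "\<exists>c\<in>S. \<forall>v\<in>S. v \<preceq> c \<longrightarrow> v = c"
proof -
  let ?down = "\<lambda>w. {u \<in> A. u \<preceq> w}"
  obtain c where "c \<in> S" and least: "\<And>w. w \<in> S \<Longrightarrow> card (?down c) \<le> card (?down w)"
    using ex_has_least_nat[of "\<lambda>w. w \<in> S" s "\<lambda>w. card (?down w)"] \<open>s \<in> S\<close> by blast
  have "v = c" if "v \<in> S" "v \<preceq> c" for v
  proof (rule ccontr)
    assume "v \<noteq> c"
    have "?down v \<subset> ?down c"
    proof
      show "?down v \<subseteq> ?down c" using le_trans that \<open>c \<in> S\<close> assms(2) by blast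
      show "?down v \<noteq> ?down c"
        using le_antisym le_refl that \<open>v \<noteq> c\<close> \<open>c \<in> S\<close> assms(2) by blast
    qed
    then have "card (?down v) < card (?down c)" using assms(1) by (simp add: psubset_card_mono)
    with least[OF \<open>v \<in> S\<close>] show False by simp
  qed
  with \<open>c \<in> S\<close> show ?thesis by blast
qed

lemma finite_ex_atom_below:
  assumes "finite A" "d \<in> A" "d \<noteq> z"
  obtains c where "bck_atom A m z c" "c \<preceq> d"
proof -
  let ?S = "{w \<in> A. w \<noteq> z \<and> w \<preceq> d}"
  obtain c where c: "c \<in> ?S" and min: "\<forall>v\<in>?S. v \<preceq> c \<longrightarrow> v = c"
    using finite_ex_minimal[of ?S d] assms le_refl by auto
  have "bck_atom A m z c"
    unfolding bck_atom_def bck_le_def using c min le_trans assms(2) by blast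
  with c that show thesis by blast
qed

definition ideal :: "'a set \<Rightarrow> bool" where
  "ideal I \<longleftrightarrow> I \<subseteq> A \<and> z \<in> I \<and> (\<forall>x\<in>A. \<forall>y\<in>I. x \<ominus> y \<in> I \<longrightarrow> x \<in> I)"

definition ideal_congruence :: "'a set \<Rightarrow> ('a \<times> 'a) set" where
  "ideal_congruence I = {(x, y) \<in> A \<times> A. x \<ominus> y \<in> I \<and> y \<ominus> x \<in> I}"

lemma ideal_down_closed: "ideal I \<Longrightarrow> x \<in> A \<Longrightarrow> y \<in> I \<Longrightarrow> x \<preceq> y \<Longrightarrow> x \<in> I"
  unfolding ideal_def by auto

lemma ideal_mem_if_diff_mem: "ideal I \<Longrightarrow> x \<ominus> y \<in> I \<Longrightarrow> y \<in> I \<Longrightarrow> x \<in> A \<Longrightarrow> x \<in> I"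
  unfolding ideal_def by blast

lemma ideal_congruence_trans:
  assumes I: "ideal I" and "(x, y) \<in> ideal_congruence I" "(y, w) \<in> ideal_congruence I"
  shows "(x, w) \<in> ideal_congruence I"
proof -
  have A: "x \<in> A" "y \<in> A" "w \<in> A" and I_xy: "x \<ominus> y \<in> I" "y \<ominus> x \<in> I"
    and I_yw: "y \<ominus> w \<in> I" "w \<ominus> y \<in> I"
    using assms(2,3) unfolding ideal_congruence_def by auto
  have "(x \<ominus> w) \<ominus> (x \<ominus> y) \<in> I"
    by (rule ideal_down_closed[OF I _ I_yw(1) bck_axiom[OF A(1,3,2)]]) (simp add: A diff_closed)
  then have "x \<ominus> w \<in> I" by (rule ideal_mem_if_diff_mem[OF I _ I_xy(1)]) (simp add: A diff_closed)
  moreover have "(w \<ominus> x) \<ominus> (w \<ominus> y) \<in> I"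
    by (rule ideal_down_closed[OF I _ I_xy(2) bck_axiom[OF A(3,1,2)]]) (simp add: A diff_closed)
  then have "w \<ominus> x \<in> I" by (rule ideal_mem_if_diff_mem[OF I _ I_yw(2)]) (simp add: A diff_closed)
  ultimately show ?thesis using A unfolding ideal_congruence_def by simp
qed

lemma alg_congruence_ideal_congruence:
  assumes I: "ideal I"
  shows "alg_congruence A m (ideal_congruence I)"
  unfolding alg_congruence_def
proof (intro conjI allI impI)
  show "equiv A (ideal_congruence I)"
  proof (rule equivI)
    show "refl_on A (ideal_congruence I)"
      using I by (auto simp: refl_on_def ideal_congruence_def ideal_def le_refl)
    show "sym (ideal_congruence I)" by (auto simp: sym_def ideal_congruence_def)
    show "trans (ideal_congruence I)" using ideal_congruence_trans[OF I] by (blast intro: transI)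
    show "ideal_congruence I \<subseteq> A \<times> A" by (auto simp: ideal_congruence_def)
  qed
next
  fix x1 y1 x2 y2
  assume "(x1, y1) \<in> ideal_congruence I \<and> (x2, y2) \<in> ideal_congruence I"
  then have A: "x1 \<in> A" "y1 \<in> A" "x2 \<in> A" "y2 \<in> A"
    and I_1: "x1 \<ominus> y1 \<in> I" "y1 \<ominus> x1 \<in> I" and I_2: "x2 \<ominus> y2 \<in> I" "y2 \<ominus> x2 \<in> I"
    unfolding ideal_congruence_def by auto
  have "(x1 \<ominus> x2, y1 \<ominus> x2) \<in> ideal_congruence I"
  proof -
    have "(x1 \<ominus> x2) \<ominus> (y1 \<ominus> x2) \<in> I"
      by (rule ideal_down_closed[OF I _ I_1(1) diff_cancel_right_le]) (simp_all add: A diff_closed)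
    moreover have "(y1 \<ominus> x2) \<ominus> (x1 \<ominus> x2) \<in> I"
      by (rule ideal_down_closed[OF I _ I_1(2) diff_cancel_right_le]) (simp_all add: A diff_closed)
    ultimately show ?thesis unfolding ideal_congruence_def by (simp add: A diff_closed)
  qed
  moreover have "(y1 \<ominus> x2, y1 \<ominus> y2) \<in> ideal_congruence I"
  proof -
    have "(y1 \<ominus> x2) \<ominus> (y1 \<ominus> y2) \<in> I"
      by (rule ideal_down_closed[OF I _ I_2(2) bck_axiom[OF A(2,3,4)]]) (simp add: A diff_closed)
    moreover have "(y1 \<ominus> y2) \<ominus> (y1 \<ominus> x2) \<in> I"
      by (rule ideal_down_closed[OF I _ I_2(1) bck_axiom[OF A(2,4,3)]]) (simp add: A diff_closed)
    ultimately show ?thesis unfolding ideal_congruence_def by (simp add: A diff_closed)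
  qed
  ultimately show "(x1 \<ominus> x2, y1 \<ominus> y2) \<in> ideal_congruence I"
    using ideal_congruence_trans[OF I] by blast
qed

lemma ideal_congruence_Id_onD:
  assumes "ideal I" "ideal_congruence I = Id_on A" "x \<in> I"
  shows "x = z"
proof -
  have "(x, z) \<in> ideal_congruence I"
    using assms(1,3) by (auto simp: ideal_def ideal_congruence_def diff_zero zero_diff zero_mem)
  with assms(2) show ?thesis by auto
qed

lemma ideal_not_above_atom:
  assumes atom: "bck_atom A m z c"
  shows "ideal {x \<in> A. \<not> c \<preceq> x}"
proof -
  have c: "c \<in> A" "c \<noteq> z" and below_c: "\<And>v. v \<in> A \<Longrightarrow> v \<preceq> c \<Longrightarrow> v = z \<or> v = c"
    using atom unfolding bck_atom_def bck_le_def by blast+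
  have above: "c \<preceq> y" if xy: "x \<in> A" "y \<in> A" "c \<preceq> x" "\<not> c \<preceq> x \<ominus> y" for x y
  proof -
    let ?t = "c \<ominus> (x \<ominus> y)"
    have xy_A: "x \<ominus> y \<in> A" using xy(1,2) by (rule diff_closed)
    have "?t = c"
      using below_c[OF diff_closed[OF c(1) xy_A] diff_le[OF c(1) xy_A]] xy(4) by blast
    moreover have "?t \<preceq> x \<ominus> (x \<ominus> y)" by (rule diff_mono[OF c(1) xy(1) xy_A xy(3)])
    ultimately have "c \<preceq> x \<ominus> (x \<ominus> y)" by simp
    from le_trans[OF c(1) _ xy(2) this diff_diff_le[OF xy(1,2)]] show "c \<preceq> y"
      by (simp add: xy diff_closed)
  qed
  have "z \<in> {x \<in> A. \<not> c \<preceq> x}" using c by (simp add: diff_zero zero_mem)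
  with above show ?thesis unfolding ideal_def by blast
qed

lemma least_nonzero_if_subdirectly_irreducible:
  assumes "finite A" "subdirectly_irreducible A m"
  obtains c where "c \<in> A" "c \<noteq> z" "\<And>x. x \<in> A \<Longrightarrow> x \<noteq> z \<Longrightarrow> c \<preceq> x"
proof -
  obtain p q where pq: "p \<in> A" "q \<in> A" "p \<noteq> q"
    and monolith: "\<And>\<theta>. alg_congruence A m \<theta> \<Longrightarrow> \<theta> \<noteq> Id_on A \<Longrightarrow> (p, q) \<in> \<theta>"
    using subdirectly_irreducible_obtain_monolith_pair diff_closed assms(2) by metis
  obtain d where d: "d \<in> A" "d \<noteq> z" "d = p \<ominus> q \<or> d = q \<ominus> p"
    using pq le_antisym diff_closed by metis
  obtain c where atom: "bck_atom A m z c" and "c \<preceq> d"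
    using finite_ex_atom_below assms(1) d by metis
  define I where "I = {x \<in> A. \<not> c \<preceq> x}"
  have I: "ideal I" unfolding I_def using ideal_not_above_atom[OF atom] .
  have "(p, q) \<notin> ideal_congruence I"
    using \<open>c \<preceq> d\<close> d unfolding I_def ideal_congruence_def by auto
  then have "ideal_congruence I = Id_on A"
    using monolith alg_congruence_ideal_congruence[OF I] by blast
  then have "c \<preceq> x" if "x \<in> A" "x \<noteq> z" for x
    using ideal_congruence_Id_onD[OF I] that unfolding I_def by blast
  with atom that show thesis unfolding bck_atom_def by blast
qed

lemma atom_le_nonzero:
  assumes "finite A" "subdirectly_irreducible A m" "bck_atom A m z a" "x \<in> A" "x \<noteq> z"
  shows "a \<preceq> x"
proof -
  obtain c where c: "c \<in> A" "c \<noteq> z" and least: "\<And>x. x \<in> A \<Longrightarrow> x \<noteq> z \<Longrightarrow> c \<preceq> x"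
    using least_nonzero_if_subdirectly_irreducible assms(1,2) by blast
  have "c = a" using assms(3) c least unfolding bck_atom_def bck_le_def by blast
  then show ?thesis using least assms(4,5) by blast
qed

lemma generated_subset: "X \<subseteq> A \<Longrightarrow> generated m z X \<subseteq> A"
proof
  show "x \<in> A" if "x \<in> generated m z X" "X \<subseteq> A" for x
    using that by (induction rule: generated.induct) (auto simp: zero_mem diff_closed)
qed

lemma finite_ex_cover:
  assumes "finite A" "x \<in> A" "y0 \<in> A" "x \<preceq> y0" "x \<noteq> y0"
  obtains y where "y \<in> A" "x \<preceq> y" "x \<noteq> y" "\<And>v. v \<in> A \<Longrightarrow> x \<preceq> v \<Longrightarrow> v \<preceq> y \<Longrightarrow> v = x \<or> v = y"
proof -
  let ?S = "{w \<in> A. x \<preceq> w \<and> x \<noteq> w}"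
  obtain y where "y \<in> ?S" "\<forall>v\<in>?S. v \<preceq> y \<longrightarrow> v = y"
    using finite_ex_minimal[of ?S y0] assms by auto
  then show thesis using that by blast
qed

end

locale cbck = bck +
  assumes comm: "x \<in> A \<Longrightarrow> y \<in> A \<Longrightarrow> x \<ominus> (x \<ominus> y) = y \<ominus> (y \<ominus> x)"
begin

lemma cover_diff_least_nonzero:
  assumes a: "a \<in> A" "a \<noteq> z" and least: "\<And>v. v \<in> A \<Longrightarrow> v \<noteq> z \<Longrightarrow> a \<preceq> v"
    and xy: "x \<in> A" "y \<in> A" "x \<preceq> y" "x \<noteq> y"
    and cover: "\<And>v. v \<in> A \<Longrightarrow> x \<preceq> v \<Longrightarrow> v \<preceq> y \<Longrightarrow> v = x \<or> v = y"
  shows "y \<ominus> a = x"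
proof -
  have "y \<ominus> x \<noteq> z" using le_antisym xy by blast
  then have "a \<preceq> y \<ominus> x" using least[OF diff_closed[OF xy(2,1)]] by blast
  then have "y \<ominus> (y \<ominus> x) \<preceq> y \<ominus> a" by (rule diff_antimono[OF a(1) diff_closed[OF xy(2,1)] xy(2)])
  moreover have "y \<ominus> (y \<ominus> x) = x" using comm[of x y] xy diff_zero by simp
  ultimately have "x \<preceq> y \<ominus> a" by simp
  then have "y \<ominus> a = x \<or> y \<ominus> a = y"
    using cover[OF diff_closed[OF xy(2) a(1)]] diff_le[OF xy(2) a(1)] by blast
  moreover have "y \<ominus> a \<noteq> y"
  proof
    assume "y \<ominus> a = y"
    have "a \<preceq> y"
      by (rule le_trans[OF a(1) diff_closed[OF xy(2,1)] xy(2) \<open>a \<preceq> y \<ominus> x\<close> diff_le[OF xy(2,1)]])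
    then have "a = y \<ominus> (y \<ominus> a)" using comm[of a y] a xy diff_zero by simp
    also have "\<dots> = z" using \<open>y \<ominus> a = y\<close> le_refl xy by simp
    finally show False using a by simp
  qed
  ultimately show ?thesis by blast
qed

lemma mem_generated_maximal_least_nonzero:
  assumes fin: "finite A" and a: "a \<in> A" "a \<noteq> z"
    and least: "\<And>v. v \<in> A \<Longrightarrow> v \<noteq> z \<Longrightarrow> a \<preceq> v"
  shows "x \<in> A \<Longrightarrow> x \<in> generated m z (bck_maximal A m z \<union> {a})"
proof (induction "card {v \<in> A. x \<preceq> v \<and> v \<noteq> x}" arbitrary: x rule: less_induct)
  case less
  show ?case
  proof (cases "x \<in> bck_maximal A m z")
    case True
    then show ?thesis by (simp add: gen_base)
  next
    case False
    then obtain y0 where "y0 \<in> A" "x \<preceq> y0" "x \<noteq> y0"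
      using less.prems unfolding bck_maximal_def bck_le_def by auto
    then obtain y where y: "y \<in> A" "x \<preceq> y" "x \<noteq> y"
      and cover: "\<And>v. v \<in> A \<Longrightarrow> x \<preceq> v \<Longrightarrow> v \<preceq> y \<Longrightarrow> v = x \<or> v = y"
      using finite_ex_cover fin less.prems by metis
    have "{v \<in> A. y \<preceq> v \<and> v \<noteq> y} \<subset> {v \<in> A. x \<preceq> v \<and> v \<noteq> x}"
      using y le_trans le_antisym less.prems by blast
    then have "y \<in> generated m z (bck_maximal A m z \<union> {a})"
      using less.hyps y(1) fin by (simp add: psubset_card_mono)
    moreover have "y \<ominus> a = x"
      using cover_diff_least_nonzero a least less.prems y cover by blast
    ultimately show ?thesis by (metis gen_op gen_base UnI2 singletonI)
  qed
qed

end

theorem mainTheorem1: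
  fixes A :: "'a set" and m :: "'a \<Rightarrow> 'a \<Rightarrow> 'a" and z :: 'a and a :: 'a
  assumes "cbck_algebra A m z"
    and "finite A"
    and "subdirectly_irreducible A m"
    and "bck_atom A m z a"
  shows "generated m z (bck_maximal A m z \<union> {a}) = A"
proof -
  interpret cbck A m z
    using assms(1) unfolding cbck_algebra_def bck_algebra_def by unfold_locales blast+
  have a: "a \<in> A" "a \<noteq> z" using assms(4) unfolding bck_atom_def by auto
  have "bck_maximal A m z \<union> {a} \<subseteq> A" using a(1) unfolding bck_maximal_def by auto
  then show ?thesis
    using generated_subset mem_generated_maximal_least_nonzero[OF assms(2) a]
      atom_le_nonzero[OF assms(2-4)] by blast
qed

end
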